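(* Let $n\ge 2$ and let $v_1,\ldots,v_n$ be positive integers with $\gcd(v_1,\ldots,v_n)=1$. Then every local maximum of the function $f(t)=\min_{1\le i\le n}\Vert t v_i\Vert$ on $\mathbb{R}$ occurs at a time of the form $t_0=\frac{m}{v_i+v_j}$, where $1\le i<j\le n$ and $m$ is an integer.
   Context: For a real number $x$, $\Vert x\Vert$ denotes the distance from $x$ to the nearest integer. *)

theory Defs
  imports Complex_Main
begin

definition dist_nint :: "real \<Rightarrow> real" where
  "dist_nint x = min (x - of_int \<lfloor>x\<rfloor>) (of_int \<lceil>x\<rceil> - x)"

definition is_local_max :: "(real \<Rightarrow> real) \<Rightarrow> real \<Rightarrow> bool" where
  "is_local_max f t0 \<longleftrightarrow> (\<exists>e>0. \<forall>t. \<bar>t - t0\<bar> < e \<longrightarrow> f t \<le> f t0)"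

end

(* Let c = f t0. Every index k attaining the minimum has t0 v_k = c or t0 v_k = -c modulo 1;
   call it rising or falling, according as \<parallel>t v_k\<parallel> grows to the right or to the left of t0.
   If c < 1/2 and all minimising indices were rising, a small step to the right would increase
   each of them while the other indices stay above c, so f would increase; symmetrically for
   falling.  So at a local maximum some i is rising and some j is falling, and then
   t0 (v_i + v_j) = c - c = 0 modulo 1.  If c = 1/2, every t0 v_k is a half-integer and any
   two indices work. *)

theory Submission
  imports Defs
begin

lemma dist_nint_nonneg: "0 \<le> dist_nint x"
  unfolding dist_nint_def using of_int_floor_le[of x] le_of_int_ceiling[of x] by linarith

lemma dist_nint_le_half: "dist_nint x \<le> 1/2"
  unfolding dist_nint_def using ceiling_diff_floor_le_1[of x] by linarith

lemma dist_nint_minus [simp]: "dist_nint (- x) = dist_nint x"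
  by (simp add: dist_nint_def ceiling_def min.commute)

lemma dist_nint_cases: "x - dist_nint x \<in> \<int> \<or> x + dist_nint x \<in> \<int>"
  unfolding dist_nint_def by (cases "x - \<lfloor>x\<rfloor> \<le> \<lceil>x\<rceil> - x") (auto simp: min_def)

lemma dist_nint_le_dist_Ints:
  assumes "m \<in> \<int>"
  shows "dist_nint x \<le> \<bar>x - m\<bar>"
proof -
  from assms obtain k where m: "m = of_int k" by (auto elim: Ints_cases)
  have "k \<le> \<lfloor>x\<rfloor> \<or> \<lceil>x\<rceil> \<le> k" using ceiling_diff_floor_le_1[of x] by linarith
  then have "m \<le> \<lfloor>x\<rfloor> \<or> \<lceil>x\<rceil> \<le> m" unfolding m by linarith
  then show ?thesis unfolding dist_nint_def using of_int_floor_le[of x] le_of_int_ceiling[of x] by linarith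
qed

lemma dist_nint_lipschitz: "dist_nint y \<le> dist_nint x + \<bar>x - y\<bar>"
  using dist_nint_cases[of x] dist_nint_le_dist_Ints[of _ y] dist_nint_nonneg[of x]
  by (smt (verit))

lemma dist_nint_add_of_int [simp]: "dist_nint (x + of_int k) = dist_nint x"
  by (simp add: dist_nint_def)

lemma dist_nint_eq_self:
  assumes "0 \<le> z" "z \<le> 1/2"
  shows "dist_nint z = z"
proof (cases "z = 0")
  case False
  then have "\<lfloor>z\<rfloor> = 0" "\<lceil>z\<rceil> = 1" using assms by (simp_all add: floor_eq_iff ceiling_eq_iff)
  then show ?thesis using assms by (simp add: dist_nint_def)
qed (simp add: dist_nint_def)

lemma dist_nint_Ints_add:
  assumes "m \<in> \<int>" "0 \<le> z" "z \<le> 1/2"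
  shows "dist_nint (m + z) = z"
  using assms dist_nint_eq_self by (auto elim!: Ints_cases simp: add.commute)

definition min_dist_nint :: "'a set \<Rightarrow> ('a \<Rightarrow> real) \<Rightarrow> real \<Rightarrow> real" where
  "min_dist_nint I w t = Min ((\<lambda>k. dist_nint (t * w k)) ` I)"

lemma min_dist_nint_minus [simp]: "min_dist_nint I w (- t) = min_dist_nint I w t"
  unfolding min_dist_nint_def by (metis dist_nint_minus mult_minus_left)

lemma is_local_max_reflect:
  assumes "is_local_max f t0"
  shows "is_local_max (\<lambda>t. f (- t)) (- t0)"
proof -
  obtain e where "e > 0" "\<forall>t. \<bar>t - t0\<bar> < e \<longrightarrow> f t \<le> f t0"
    using assms unfolding is_local_max_def by blast
  then show ?thesis unfolding is_local_max_def
    by (metis abs_minus_commute diff_minus_eq_add minus_minus uminus_add_conv_diff)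
qed

lemma eventually_dist_nint_gt:
  assumes "0 < w" "c < 1/2" "c \<le> dist_nint x" "dist_nint x = c \<Longrightarrow> x - c \<in> \<int>"
  shows "eventually (\<lambda>d. c < dist_nint (x + d * w)) (at_right 0)"
proof (cases "dist_nint x = c")
  case True
  have "c < dist_nint (x + d * w)" if "0 < d" "d < (1/2 - c) / w" for d
  proof -
    have "0 < d * w" "d * w < 1/2 - c"
      using that assms(1) by (simp_all add: pos_less_divide_eq)
    then have "dist_nint ((x - c) + (c + d * w)) = c + d * w"
      using dist_nint_nonneg[of x] True by (intro dist_nint_Ints_add assms(4)) auto
    then show ?thesis using \<open>0 < d * w\<close> by simp
  qed
  then show ?thesis unfolding eventually_at_right_field
    using assms(1,2) by (intro exI[of _ "(1/2 - c) / w"]) auto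
next
  case False
  have "c < dist_nint (x + d * w)" if "0 < d" "d < (dist_nint x - c) / w" for d
  proof -
    have "d * w < dist_nint x - c" using that assms(1) by (simp add: pos_less_divide_eq)
    then show ?thesis using dist_nint_lipschitz[of x "x + d * w"] that assms(1) by simp
  qed
  then show ?thesis unfolding eventually_at_right_field
    using assms(1,3) False by (intro exI[of _ "(dist_nint x - c) / w"]) auto
qed

lemma not_local_max_if_rising:
  assumes "finite I" "I \<noteq> {}" "\<forall>k\<in>I. 0 < w k" and c: "min_dist_nint I w t0 < 1/2"
    and rising: "\<forall>k\<in>I. dist_nint (t0 * w k) = min_dist_nint I w t0 \<longrightarrow> t0 * w k - min_dist_nint I w t0 \<in> \<int>"
  shows "\<not> is_local_max (min_dist_nint I w) t0"
proof
  let ?c = "min_dist_nint I w t0"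
  assume "is_local_max (min_dist_nint I w) t0"
  then obtain e where "e > 0" and local_max: "\<And>t. \<bar>t - t0\<bar> < e \<Longrightarrow> min_dist_nint I w t \<le> ?c"
    unfolding is_local_max_def by blast
  have "\<forall>k\<in>I. ?c \<le> dist_nint (t0 * w k)"
    using assms(1) unfolding min_dist_nint_def by auto
  then have "\<forall>k\<in>I. eventually (\<lambda>d. ?c < dist_nint (t0 * w k + d * w k)) (at_right 0)"
    using assms(3) c rising by (auto intro: eventually_dist_nint_gt)
  moreover have "eventually (\<lambda>d. d < e) (at_right 0)"
    using \<open>e > 0\<close> unfolding eventually_at_right_field by blast
  ultimately have "eventually (\<lambda>d. 0 < d \<and> d < e \<and> (\<forall>k\<in>I. ?c < dist_nint (t0 * w k + d * w k))) (at_right 0)"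
    using assms(1) by (intro eventually_conj eventually_at_right_less eventually_ball_finite)
  then obtain d where d: "0 < d" "d < e" "\<forall>k\<in>I. ?c < dist_nint (t0 * w k + d * w k)"
    using eventually_happens'[OF trivial_limit_at_right_real] by blast
  have "?c < min_dist_nint I w (t0 + d)"
    using d(3) assms(1,2) unfolding min_dist_nint_def by (simp add: distrib_right)
  moreover have "min_dist_nint I w (t0 + d) \<le> ?c"
    using d by (intro local_max) simp
  ultimately show False by simp
qed

lemma not_local_max_if_falling:
  assumes "finite I" "I \<noteq> {}" "\<forall>k\<in>I. 0 < w k" and c: "min_dist_nint I w t0 < 1/2"
    and falling: "\<forall>k\<in>I. dist_nint (t0 * w k) = min_dist_nint I w t0 \<longrightarrow> t0 * w k + min_dist_nint I w t0 \<in> \<int>"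
  shows "\<not> is_local_max (min_dist_nint I w) t0"
proof
  assume "is_local_max (min_dist_nint I w) t0"
  then have "is_local_max (min_dist_nint I w) (- t0)"
    using is_local_max_reflect by fastforce
  moreover have "\<forall>k\<in>I. dist_nint (- t0 * w k) = min_dist_nint I w (- t0) \<longrightarrow> - t0 * w k - min_dist_nint I w (- t0) \<in> \<int>"
  proof (intro ballI impI)
    fix k assume "k \<in> I" "dist_nint (- t0 * w k) = min_dist_nint I w (- t0)"
    then have "t0 * w k + min_dist_nint I w t0 \<in> \<int>" using falling by simp
    then have "- (t0 * w k + min_dist_nint I w t0) \<in> \<int>" by (rule Ints_minus)
    then show "- t0 * w k - min_dist_nint I w (- t0) \<in> \<int>" by simp
  qed
  ultimately show False
    using not_local_max_if_rising[of I w "- t0"] assms(1-3) c by simp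
qed

lemma local_max_min_dist_nint:
  assumes card: "2 \<le> card I" and pos: "\<forall>k\<in>I. 0 < w k"
    and local_max: "is_local_max (min_dist_nint I w) t0"
  shows "\<exists>i\<in>I. \<exists>j\<in>I. i \<noteq> j \<and> t0 * (w i + w j) \<in> \<int>"
proof -
  let ?c = "min_dist_nint I w t0"
  have "finite I" "I \<noteq> {}" using card by (auto intro: card_ge_0_finite)
  have min_le: "?c \<le> dist_nint (t0 * w k)" if "k \<in> I" for k
    using \<open>finite I\<close> that unfolding min_dist_nint_def by simp
  have "?c \<in> (\<lambda>k. dist_nint (t0 * w k)) ` I"
    unfolding min_dist_nint_def using \<open>finite I\<close> \<open>I \<noteq> {}\<close> by (intro Min_in) auto
  then have "?c \<le> 1/2" using dist_nint_le_half by auto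
  have active_cases: "t0 * w k - ?c \<in> \<int> \<or> t0 * w k + ?c \<in> \<int>" if "dist_nint (t0 * w k) = ?c" for k
    using dist_nint_cases[of "t0 * w k"] that by simp
  have pair: "t0 * (w i + w j) \<in> \<int>" if "t0 * w i - ?c \<in> \<int>" "t0 * w j + ?c \<in> \<int>" for i j
    using Ints_add[OF that] by (simp add: distrib_left)
  show ?thesis
  proof (cases "?c = 1/2")
    case True
    obtain i j where "i \<in> I" "j \<in> I" "i \<noteq> j"
      using card by (metis card_le_Suc_iff numeral_2_eq_2 insert_iff)
    have "t0 * w k - ?c \<in> \<int> \<and> t0 * w k + ?c \<in> \<int>" if "k \<in> I" for k
    proof -
      have "dist_nint (t0 * w k) = ?c" using min_le[OF that] dist_nint_le_half True by (metis antisym)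
      moreover have "t0 * w k + ?c = (t0 * w k - ?c) + 1" using True by simp
      ultimately show ?thesis using active_cases[of k] add_in_Ints_iff_right[OF Ints_1] by metis
    qed
    then show ?thesis using pair \<open>i \<in> I\<close> \<open>j \<in> I\<close> \<open>i \<noteq> j\<close> by blast
  next
    case False
    with \<open>?c \<le> 1/2\<close> have "?c < 1/2" by simp
    obtain i where i: "i \<in> I" "dist_nint (t0 * w i) = ?c" "t0 * w i + ?c \<notin> \<int>"
      using not_local_max_if_falling[OF \<open>finite I\<close> \<open>I \<noteq> {}\<close> pos \<open>?c < 1/2\<close>] local_max by blast
    obtain j where j: "j \<in> I" "dist_nint (t0 * w j) = ?c" "t0 * w j - ?c \<notin> \<int>"
      using not_local_max_if_rising[OF \<open>finite I\<close> \<open>I \<noteq> {}\<close> pos \<open>?c < 1/2\<close>] local_max by blast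
    have "t0 * w i - ?c \<in> \<int>" "t0 * w j + ?c \<in> \<int>"
      using active_cases i(2,3) j(2,3) by blast+
    moreover from this j(3) have "i \<noteq> j" by blast
    ultimately show ?thesis using pair i(1) j(1) by blast
  qed
qed

theorem proposition4p1:
  fixes n :: nat and v :: "nat \<Rightarrow> nat" and t0 :: real
  assumes "n \<ge> 2"
    and "\<forall>i\<in>{1..n}. v i > 0"
    and "Gcd (v ` {1..n}) = 1"
    and "is_local_max (\<lambda>t. Min ((\<lambda>i. dist_nint (t * real (v i))) ` {1..n})) t0"
  shows "\<exists>i j. \<exists>m::int. 1 \<le> i \<and> i < j \<and> j \<le> n \<and> t0 = real_of_int m / real (v i + v j)"
proof -
  have "2 \<le> card {1..n}" using assms(1) by simp
  moreover have "\<forall>k\<in>{1..n}. 0 < real (v k)" using assms(2) by simp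
  moreover have "is_local_max (min_dist_nint {1..n} (\<lambda>i. real (v i))) t0"
    using assms(4) unfolding min_dist_nint_def .
  ultimately have "\<exists>i\<in>{1..n}. \<exists>j\<in>{1..n}. i \<noteq> j \<and> t0 * (real (v i) + real (v j)) \<in> \<int>"
    by (rule local_max_min_dist_nint)
  then obtain i j where ij: "i \<in> {1..n}" "j \<in> {1..n}" "i \<noteq> j"
    and "t0 * (real (v i) + real (v j)) \<in> \<int>"
    by blast
  then obtain m where m: "t0 * real (v i + v j) = of_int m" by (auto elim: Ints_cases)
  have "0 < real (v i + v j)" using assms(2) ij(1) by fastforce
  then have "t0 = real_of_int m / real (v i + v j)" "t0 = real_of_int m / real (v j + v i)"
    using m by (simp_all add: eq_divide_eq add.commute)
  moreover have "i < j \<or> j < i" using ij(3) by arith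
  ultimately show ?thesis using ij(1,2) by (metis atLeastAtMost_iff)
qed

end
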